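(* Let $\theta\in\Omega(W)$ be the linear form $y=(y_0,y_1,\dots)\mapsto\alpha_0(0)$, where $y_0=\alpha_0e+\beta_0X^rf$ with $\alpha_0,\beta_0\in k[\![X]\!]$. Then for every $\begin{pmatrix}a&b\\0&d\end{pmatrix}\in\mathrm B\cap\mathrm K\mathrm Z$, $$\begin{pmatrix}a&b\\0&d\end{pmatrix}\star\theta=\chi(ad)\,\omega^r(a)\,\theta.$$
   Context: $p$ prime, $k$ finite extension of $\mathbf F_p$, $r\in\{0,\dots,p-1\}$, $\chi=\omega^s\mu_\lambda$ ($\lambda\in k^\times$), viewed also as characters of $\mathbf Q_p^\times$ by $\omega(a)=ap^{-\mathrm{val}(a)}\bmod p$, $\mu_\lambda(a)=\lambda^{\mathrm{val}(a)}$. $W=\rho(r,\chi)=\mathrm{ind}(\omega_2^{r+1})\otimes\chi$ (irreducible 2-dimensional, determinant of $\mathrm{ind}(\omega_2^{r+1})$ equal to $\omega^{r+1}$, restriction to inertia $\omega_2^{r+1}\oplus\omega_2^{p(r+1)}$). $\mathrm D(W)$ is its étale $(\phi,\Gamma)$-module over $k(\!(X)\!)$ with basis $e,f$ such that $\phi(e)=\lambda f$, $\phi(f)=-\lambda X^{-(r+1)(p-1)}e$, $\gamma(e)=\omega(\gamma)^sf_\gamma^{(r+1)/(p+1)}e$, $\gamma(f)=\omega(\gamma)^sf_\gamma^{p(r+1)/(p+1)}f$ with $f_\gamma(X)=\omega(\gamma)X/\gamma(X)$, $\gamma(X)=(1+X)^{\chi_{\mathrm{cycl}}(\gamma)}-1$;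 $\psi$ is the left inverse of $\phi$ with $\psi(a\phi(d))=\psi(a)d$ (on $k(\!(X)\!)$: $\psi(\sum_{i=0}^{p-1}(1+X)^i\phi(a_i))=a_0$). One has $\mathrm D^\sharp(W)=k[\![X]\!]e\oplus X^rk[\![X]\!]f$. $\varprojlim_\psi\mathrm D^\sharp(W)$ is the set of $(v_0,v_1,\dots)$, $v_i\in\mathrm D^\sharp(W)$, $\psi(v_{i+1})=v_i$, with the action of $\mathrm B=\mathrm B_2(\mathbf Q_p)$: $(\mathrm{diag}(x,x)\star v)_i=(\omega^r\chi^2)^{-1}(x)v_i$; $(\mathrm{diag}(1,p^j)\star v)_i=v_{i-j}$ (meaning $\psi^{j-i}(v_0)$ if $i<j$); $(\mathrm{diag}(1,a)\star v)_i=\gamma_a^{-1}(v_i)$ for $a\in\mathbf Z_p^\times$, $\chi_{\mathrm{cycl}}(\gamma_a)=a$; $(\begin{pmatrix}1&z\\0&1\end{pmatrix}\star v)_i=\psi^j((1+X)^{p^{i+j}z}v_{i+j})$ for $i+j\ge-\mathrm{val}(z)$. $\Omega(W)$ is its continuous $k$-dual, with $(g\star\theta)(y)=\theta(g^{-1}\star y)$. $\mathrm K=\mathrm{GL}_2(\mathbf Z_p)$, $\mathrm Z$ the centre of $\mathrm{GL}_2(\mathbf Q_p)$. *)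

theory Defs
  imports "HOL-Computational_Algebra.Formal_Laurent_Series"
begin

section \<open>p-adic integers, as compatible sequences of residues x n \<in> [0, p^n)\<close>

definition Zp :: "nat \<Rightarrow> (nat \<Rightarrow> int) set" where
  "Zp p = {x. \<forall>n. 0 \<le> x n \<and> x n < int p ^ n \<and> x n = x (Suc n) mod int p ^ n}"

definition zp_unit :: "nat \<Rightarrow> (nat \<Rightarrow> int) \<Rightarrow> bool" where
  "zp_unit p x \<longleftrightarrow> x \<in> Zp p \<and> x 1 \<noteq> 0"

definition zp_zero :: "nat \<Rightarrow> int" where "zp_zero = (\<lambda>n. 0)"
definition zp_one :: "nat \<Rightarrow> nat \<Rightarrow> int" where "zp_one p = (\<lambda>n. 1 mod int p ^ n)"
definition zp_of_int :: "nat \<Rightarrow> int \<Rightarrow> nat \<Rightarrow> int" where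
  "zp_of_int p a = (\<lambda>n. a mod int p ^ n)"
definition zp_mult :: "nat \<Rightarrow> (nat \<Rightarrow> int) \<Rightarrow> (nat \<Rightarrow> int) \<Rightarrow> nat \<Rightarrow> int" where
  "zp_mult p x y = (\<lambda>n. (x n * y n) mod int p ^ n)"
definition zp_neg :: "nat \<Rightarrow> (nat \<Rightarrow> int) \<Rightarrow> nat \<Rightarrow> int" where
  "zp_neg p x = (\<lambda>n. (- x n) mod int p ^ n)"
definition zp_sub :: "nat \<Rightarrow> (nat \<Rightarrow> int) \<Rightarrow> (nat \<Rightarrow> int) \<Rightarrow> nat \<Rightarrow> int" where
  "zp_sub p x y = (\<lambda>n. (x n - y n) mod int p ^ n)"
definition zp_pmul :: "nat \<Rightarrow> nat \<Rightarrow> (nat \<Rightarrow> int) \<Rightarrow> nat \<Rightarrow> int" where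
  "zp_pmul p m x = (\<lambda>n. (int p ^ m * x n) mod int p ^ n)"
definition zp_inv :: "nat \<Rightarrow> (nat \<Rightarrow> int) \<Rightarrow> nat \<Rightarrow> int" where
  "zp_inv p u = (THE w. w \<in> Zp p \<and> zp_mult p u w = zp_one p)"
text \<open>the p-adic integer a/b (b prime to p)\<close>
definition zp_frac :: "nat \<Rightarrow> int \<Rightarrow> int \<Rightarrow> nat \<Rightarrow> int" where
  "zp_frac p a b = (THE w. w \<in> Zp p \<and> zp_mult p (zp_of_int p b) w = zp_of_int p a)"

section \<open>Q_p: None is 0, Some (v,u) with u a p-adic unit is p^v u\<close>

type_synonym qp = "(int \<times> (nat \<Rightarrow> int)) option"

definition qp_wf :: "nat \<Rightarrow> qp \<Rightarrow> bool" where
  "qp_wf p x = (case x of None \<Rightarrow> True | Some (v, u) \<Rightarrow> zp_unit p u)"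
definition qp_units :: "nat \<Rightarrow> qp set" where
  "qp_units p = {x. x \<noteq> None \<and> qp_wf p x}"
definition qp_mult :: "nat \<Rightarrow> qp \<Rightarrow> qp \<Rightarrow> qp" where
  "qp_mult p x y = (case (x, y) of (Some (v, u), Some (w, t)) \<Rightarrow> Some (v + w, zp_mult p u t)
                     | _ \<Rightarrow> None)"
definition qp_inv :: "nat \<Rightarrow> qp \<Rightarrow> qp" where
  "qp_inv p x = map_option (\<lambda>(v, u). (- v, zp_inv p u)) x"
definition qp_neg :: "nat \<Rightarrow> qp \<Rightarrow> qp" where
  "qp_neg p x = map_option (\<lambda>(v, u). (v, zp_neg p u)) x"
definition qp_of_zp :: "nat \<Rightarrow> (nat \<Rightarrow> int) \<Rightarrow> qp" where
  "qp_of_zp p x = (if x = zp_zero then None else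
     (let m = (LEAST n. x (Suc n) \<noteq> 0) in Some (int m, \<lambda>n. x (n + m) div int p ^ m)))"

section \<open>The Borel subgroup B (upper triangular (a b; 0 d)) and B \<inter> KZ\<close>

definition Bor :: "nat \<Rightarrow> (qp \<times> qp \<times> qp) set" where
  "Bor p = {(a, b, d). a \<in> qp_units p \<and> d \<in> qp_units p \<and> qp_wf p b}"

definition GL2Zp :: "nat \<Rightarrow> ((nat \<Rightarrow> int) \<times> (nat \<Rightarrow> int) \<times> (nat \<Rightarrow> int) \<times> (nat \<Rightarrow> int)) set" where
  "GL2Zp p = {(k11, k12, k21, k22). k11 \<in> Zp p \<and> k12 \<in> Zp p \<and> k21 \<in> Zp p \<and> k22 \<in> Zp p \<and>
      zp_unit p (zp_sub p (zp_mult p k11 k22) (zp_mult p k12 k21))}"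

definition BKZ :: "nat \<Rightarrow> (qp \<times> qp \<times> qp) set" where
  "BKZ p = {(a, b, d). (a, b, d) \<in> Bor p \<and>
     (\<exists>z k11 k12 k21 k22. z \<in> qp_units p \<and> (k11, k12, k21, k22) \<in> GL2Zp p \<and>
        a = qp_mult p z (qp_of_zp p k11) \<and> b = qp_mult p z (qp_of_zp p k12) \<and>
        None = qp_mult p z (qp_of_zp p k21) \<and> d = qp_mult p z (qp_of_zp p k22))}"

definition B_inv :: "nat \<Rightarrow> qp \<times> qp \<times> qp \<Rightarrow> qp \<times> qp \<times> qp" where
  "B_inv p g = (case g of (a, b, d) \<Rightarrow>
     (qp_inv p a, qp_neg p (qp_mult p b (qp_mult p (qp_inv p a) (qp_inv p d))), qp_inv p d))"

text \<open>omega(x) = x p^(-val x) mod p\<close>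
definition omega :: "nat \<Rightarrow> qp \<Rightarrow> 'k::field" where
  "omega p x = (case x of None \<Rightarrow> 0 | Some (v, u) \<Rightarrow> of_int (u 1))"
definition chi :: "nat \<Rightarrow> int \<Rightarrow> 'k::field \<Rightarrow> qp \<Rightarrow> 'k" where
  "chi p s lam x = (case x of None \<Rightarrow> 0 | Some (v, u) \<Rightarrow> omega p x powi s * lam powi v)"

text \<open>(1+X)^c for c \<in> Z_p: coefficient n is that of (1+X)^(c mod p^(n+1))\<close>
definition fps_binom_zp :: "(nat \<Rightarrow> int) \<Rightarrow> 'k::field fps" where
  "fps_binom_zp c = Abs_fps (\<lambda>n. ((1 + fps_X) ^ nat (c (Suc n))) $ n)"

text \<open>F^c for a power series F with constant term 1: (1 + (F-1))^c\<close>
definition fps_pow_zp :: "'k::field fps \<Rightarrow> (nat \<Rightarrow> int) \<Rightarrow> 'k fps" where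
  "fps_pow_zp F c = fps_compose (fps_binom_zp c) (F - 1)"

definition gX :: "(nat \<Rightarrow> int) \<Rightarrow> 'k::field fps" where
  "gX a = fps_binom_zp a - 1"

definition gamma_fls :: "(nat \<Rightarrow> int) \<Rightarrow> 'k::field fls \<Rightarrow> 'k fls" where
  "gamma_fls a F = fls_compose_fps F (gX a)"

definition phi_fls :: "nat \<Rightarrow> 'k::field fls \<Rightarrow> 'k fls" where
  "phi_fls p F = fls_compose_fps F ((1 + fps_X) ^ p - 1)"

definition psi_fls :: "nat \<Rightarrow> 'k::field fls \<Rightarrow> 'k fls" where
  "psi_fls p F = (THE a0. \<exists>a. F = (\<Sum>i<p. fps_to_fls ((1 + fps_X) ^ i) * phi_fls p (a i)) \<and> a 0 = a0)"

section \<open>D(W): an element (u, v) stands for u e + v f\<close>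

type_synonym 'k dmod = "'k fls \<times> 'k fls"

definition smulD :: "'k::field fls \<Rightarrow> 'k dmod \<Rightarrow> 'k dmod" where
  "smulD c y = (c * fst y, c * snd y)"

definition phi_e :: "'k::field \<Rightarrow> 'k dmod" where
  "phi_e lam = (0, fls_const lam)"
definition phi_f :: "nat \<Rightarrow> nat \<Rightarrow> 'k::field \<Rightarrow> 'k dmod" where
  "phi_f p r lam = (- fls_const lam * fls_X_intpow (- (int (r + 1) * (int p - 1))), 0)"

text \<open>psi(c1 phi(e) + c2 phi(f)) = psi(c1) e + psi(c2) f; coordinates by Cramer's rule\<close>
definition psiD :: "nat \<Rightarrow> nat \<Rightarrow> 'k::field \<Rightarrow> 'k dmod \<Rightarrow> 'k dmod" where
  "psiD p r lam y = (let (b11, b12) = phi_e lam; (b21, b22) = phi_f p r lam;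
       dt = b11 * b22 - b12 * b21;
       c1 = (fst y * b22 - snd y * b21) / dt;
       c2 = (b11 * snd y - b12 * fst y) / dt
     in (psi_fls p c1, psi_fls p c2))"

definition f_gamma :: "(nat \<Rightarrow> int) \<Rightarrow> 'k::field fps" where
  "f_gamma a = fls_regpart (fls_const (of_int (a 1)) * fls_X / fps_to_fls (gX a))"

definition gammaD :: "nat \<Rightarrow> nat \<Rightarrow> int \<Rightarrow> (nat \<Rightarrow> int) \<Rightarrow> 'k::field dmod \<Rightarrow> 'k dmod" where
  "gammaD p r s a y =
     (gamma_fls a (fst y) * fls_const (of_int (a 1) powi s) *
        fps_to_fls (fps_pow_zp (f_gamma a) (zp_frac p (int (r + 1)) (int p + 1))),
      gamma_fls a (snd y) * fls_const (of_int (a 1) powi s) *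
        fps_to_fls (fps_pow_zp (f_gamma a) (zp_frac p (int p * int (r + 1)) (int p + 1))))"

definition Dsharp :: "nat \<Rightarrow> 'k::field dmod set" where
  "Dsharp r = {(fps_to_fls al, fls_X_intpow (int r) * fps_to_fls be) | al be. True}"

definition plim :: "nat \<Rightarrow> nat \<Rightarrow> 'k::field \<Rightarrow> (nat \<Rightarrow> 'k dmod) set" where
  "plim p r lam = {v. \<forall>i. v i \<in> Dsharp r \<and> psiD p r lam (v (Suc i)) = v i}"

definition act_scal :: "nat \<Rightarrow> nat \<Rightarrow> int \<Rightarrow> 'k::field \<Rightarrow> qp \<Rightarrow> (nat \<Rightarrow> 'k dmod) \<Rightarrow> nat \<Rightarrow> 'k dmod" where
  "act_scal p r s lam x v = (\<lambda>i. smulD (fls_const (inverse (omega p x ^ r * chi p s lam x ^ 2))) (v i))"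

definition act_shift :: "nat \<Rightarrow> nat \<Rightarrow> 'k::field \<Rightarrow> int \<Rightarrow> (nat \<Rightarrow> 'k dmod) \<Rightarrow> nat \<Rightarrow> 'k dmod" where
  "act_shift p r lam j v = (\<lambda>i. if j \<le> int i then v (nat (int i - j))
                                 else (psiD p r lam ^^ nat (j - int i)) (v 0))"

definition act_gam :: "nat \<Rightarrow> nat \<Rightarrow> int \<Rightarrow> (nat \<Rightarrow> int) \<Rightarrow> (nat \<Rightarrow> 'k::field dmod) \<Rightarrow> nat \<Rightarrow> 'k dmod" where
  "act_gam p r s a v = (\<lambda>i. gammaD p r s (zp_inv p a) (v i))"

definition act_unip :: "nat \<Rightarrow> nat \<Rightarrow> 'k::field \<Rightarrow> qp \<Rightarrow> (nat \<Rightarrow> 'k dmod) \<Rightarrow> nat \<Rightarrow> 'k dmod" where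
  "act_unip p r lam z v = (\<lambda>i. case z of None \<Rightarrow> v i
     | Some (w, u) \<Rightarrow> (let j = nat (- w - int i) in
         (psiD p r lam ^^ j) (smulD (fps_to_fls (fps_binom_zp (zp_pmul p (nat (int i + int j + w)) u)))
                                     (v (i + j)))))"

text \<open>(a b; 0 d) = (1 b/d; 0 1) diag(a,a) diag(1,p^j) diag(1,u), where d/a = p^j u\<close>
definition act_B :: "nat \<Rightarrow> nat \<Rightarrow> int \<Rightarrow> 'k::field \<Rightarrow> qp \<times> qp \<times> qp \<Rightarrow> (nat \<Rightarrow> 'k dmod) \<Rightarrow> nat \<Rightarrow> 'k dmod" where
  "act_B p r s lam g v = (case g of (a, b, d) \<Rightarrow>
     (case qp_mult p d (qp_inv p a) of None \<Rightarrow> v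
      | Some (j, u) \<Rightarrow>
         act_unip p r lam (qp_mult p b (qp_inv p d))
           (act_scal p r s lam a (act_shift p r lam j (act_gam p r s u v)))))"

definition theta :: "(nat \<Rightarrow> 'k::field dmod) \<Rightarrow> 'k" where
  "theta y = fls_nth (fst (y 0)) 0"

end

theory Submission imports Defs "HOL-Number_Theory.Cong"
begin

(*
  For g = (a b; 0 d) in B \<inter> KZ the entries a and d have the same
  valuation v and b has valuation at least v.  Hence g^{-1} decomposes with
  d'/a' a p-adic unit u (no shift by a power of p), and with b'/d' integral, so the
  unipotent part only multiplies by (1+X)^c, whose constant term is 1.  On constant
  terms, gamma_u^{-1} and the factor f_gamma^{(r+1)/(p+1)} are trivial, so g^{-1}
  multiplies alpha_0(0) by omega(u^{-1})^s and the central factor (omega^r chi^2)^{-1}(a').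
*)

lemma of_int_mod_char:
  assumes "CHAR('k::field) = p"
  shows "(of_int (x mod int p) :: 'k) = of_int x"
proof -
  have "(of_int x :: 'k) = of_int (x mod int p) + of_int (int p) * of_int (x div int p)"
    by (metis mult_div_mod_eq add.commute of_int_add of_int_mult)
  moreover have "(of_int (int p) :: 'k) = 0" using assms of_nat_CHAR[where 'a='k] by simp
  ultimately show ?thesis by simp
qed

lemma Zp_range:
  assumes "x \<in> Zp p"
  shows "0 \<le> x n" "x n < int p ^ n"
  using assms unfolding Zp_def by blast+

lemma Zp_compatible:
  assumes "x \<in> Zp p"
  shows "x n = x (Suc n) mod int p ^ n"
  using assms unfolding Zp_def by blast

lemma Zp_mod_p:
  assumes "x \<in> Zp p" "n \<ge> 1"
  shows "x n mod int p = x 1"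
  using assms(2)
proof (induction n rule: dec_induct)
  case base
  show ?case using Zp_range[OF assms(1), of 1] by simp
next
  case (step n)
  have "int p dvd int p ^ n" using step(1) by (simp add: dvd_power)
  hence "x n mod int p = x (Suc n) mod int p"
    using Zp_compatible[OF assms(1), of n] by (simp add: mod_mod_cancel)
  then show ?case using step by simp
qed

lemma unit_residue_not_dvd:
  assumes "zp_unit p u"
  shows "\<not> int p dvd u 1"
proof -
  have "0 \<le> u 1" "u 1 < int p" "u 1 \<noteq> 0"
    using assms Zp_range[of u p 1] unfolding zp_unit_def by auto
  thus ?thesis by (auto dest: zdvd_imp_le)
qed

lemma Zp_unit_coprime:
  assumes "prime p" "zp_unit p x"
  shows "coprime (x n) (int p ^ n)"
proof (cases "n = 0")
  case False
  have "x \<in> Zp p" using assms(2) unfolding zp_unit_def by simp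
  hence "x n mod int p = x 1" using Zp_mod_p[of x p n] False by simp
  hence "\<not> int p dvd x n" using unit_residue_not_dvd[OF assms(2)]
    by (metis mod_mod_trivial dvd_eq_mod_eq_0)
  moreover have "prime (int p)" using assms(1) by simp
  ultimately have "coprime (int p) (x n)" by (simp add: prime_imp_coprime)
  thus ?thesis by (simp add: coprime_commute)
qed simp

lemma zp_level_inverse:
  assumes "prime p" "zp_unit p x"
  shows "\<exists>!t. 0 \<le> t \<and> t < int p ^ n \<and> [x n * t = 1] (mod int p ^ n)"
proof -
  have pp: "int p > 1" using assms(1) prime_gt_1_nat by simp
  obtain t where "[x n * t = 1] (mod int p ^ n)"
    using cong_solve_coprime_int[OF Zp_unit_coprime[OF assms]] by blast
  hence "[x n * (t mod int p ^ n) = 1] (mod int p ^ n)"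
    by (metis cong_def mod_mult_right_eq)
  moreover have "0 \<le> t mod int p ^ n" "t mod int p ^ n < int p ^ n" using pp by auto
  moreover have "t = t'"
    if "0 \<le> t" "t < int p ^ n" "[x n * t = 1] (mod int p ^ n)"
       "0 \<le> t'" "t' < int p ^ n" "[x n * t' = 1] (mod int p ^ n)" for t t'
  proof -
    have "[x n * t = x n * t'] (mod int p ^ n)" using that by (meson cong_sym cong_trans)
    hence "[t = t'] (mod int p ^ n)"
      using Zp_unit_coprime[OF assms] cong_mult_lcancel by blast
    thus ?thesis using that cong_less_imp_eq_int by blast
  qed
  ultimately show ?thesis by blast
qed

text \<open>The level-wise inverses are compatible, so they form the p-adic inverse of a unit.\<close>
lemma zp_inv_prop:
  assumes "prime p" "zp_unit p x"
  shows "zp_inv p x \<in> Zp p \<and> zp_mult p x (zp_inv p x) = zp_one p"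
proof -
  have pp: "int p > 1" using assms(1) prime_gt_1_nat by simp
  define P where "P = (\<lambda>n t. 0 \<le> t \<and> t < int p ^ n \<and> [x n * t = 1] (mod int p ^ n))"
  have uniq: "\<exists>!t. P n t" for n unfolding P_def by (rule zp_level_inverse[OF assms])
  define w where "w = (\<lambda>n. THE t. P n t)"
  have Pw: "P n (w n)" for n unfolding w_def using uniq by (rule theI')
  have xZ: "x \<in> Zp p" using assms(2) unfolding zp_unit_def by simp
  have compatible: "w n = w (Suc n) mod int p ^ n" for n
  proof -
    have "[x (Suc n) * w (Suc n) = 1] (mod int p ^ n)"
      using Pw[of "Suc n"] unfolding P_def
      by (auto intro: cong_dvd_modulus simp: power_Suc)
    hence "[x n * (w (Suc n) mod int p ^ n) = 1] (mod int p ^ n)"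
      by (simp add: cong_def Zp_compatible[OF xZ, of n] mod_mult_left_eq mod_mult_right_eq)
    hence "P n (w (Suc n) mod int p ^ n)" unfolding P_def using pp by auto
    thus ?thesis using uniq Pw by blast
  qed
  have wZ: "w \<in> Zp p"
    unfolding Zp_def using Pw compatible unfolding P_def by blast
  have wm: "zp_mult p x w = zp_one p"
    unfolding zp_mult_def zp_one_def using Pw unfolding P_def cong_def by auto
  have "v = w" if "v \<in> Zp p" "zp_mult p x v = zp_one p" for v
  proof
    fix n
    have "(x n * v n) mod int p ^ n = 1 mod int p ^ n"
      using fun_cong[OF that(2), of n] unfolding zp_mult_def zp_one_def by simp
    hence "P n (v n)" using Zp_range[OF that(1), of n] unfolding P_def cong_def by simp
    thus "v n = w n" using uniq Pw by blast
  qed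
  hence "\<exists>!w. w \<in> Zp p \<and> zp_mult p x w = zp_one p" using wZ wm by blast
  thus ?thesis unfolding zp_inv_def by (rule theI')
qed

lemma zp_mult_Zp:
  assumes "u \<in> Zp p" "t \<in> Zp p"
  shows "zp_mult p u t \<in> Zp p"
  unfolding Zp_def zp_mult_def
proof (safe)
  fix n
  have "int p ^ n > 0" using Zp_range(1)[OF assms(1), of 1] Zp_range(2)[OF assms(1), of 1] by simp
  thus "0 \<le> u n * t n mod int p ^ n" "u n * t n mod int p ^ n < int p ^ n" by auto
  have dv: "int p ^ n dvd int p ^ Suc n" by (simp add: power_Suc)
  show "u n * t n mod int p ^ n = u (Suc n) * t (Suc n) mod int p ^ Suc n mod int p ^ n"
    unfolding mod_mod_cancel[OF dv] Zp_compatible[OF assms(1), of n] Zp_compatible[OF assms(2), of n]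
    by (simp add: mod_mult_eq)
qed

lemma zp_unit_mult:
  assumes "prime p" "zp_unit p u" "zp_unit p t"
  shows "zp_unit p (zp_mult p u t)" "zp_mult p u t 1 = (u 1 * t 1) mod int p"
proof -
  have "prime (int p)" using assms(1) by simp
  hence "\<not> int p dvd u 1 * t 1"
    using unit_residue_not_dvd[OF assms(2)] unit_residue_not_dvd[OF assms(3)]
    by (simp add: prime_dvd_mult_iff)
  hence "(u 1 * t 1) mod int p \<noteq> 0" by (simp add: dvd_eq_mod_eq_0)
  thus "zp_unit p (zp_mult p u t)" "zp_mult p u t 1 = (u 1 * t 1) mod int p"
    using zp_mult_Zp assms(2,3) unfolding zp_unit_def by (simp_all add: zp_mult_def)
qed

lemma zp_inv_unit:
  assumes "prime p" "zp_unit p u"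
  shows "zp_unit p (zp_inv p u)" "(u 1 * zp_inv p u 1) mod int p = 1"
proof -
  have inv: "zp_inv p u \<in> Zp p" "zp_mult p u (zp_inv p u) = zp_one p"
    using zp_inv_prop[OF assms] by blast+
  have "int p > 1" using assms(1) prime_gt_1_nat by simp
  thus "(u 1 * zp_inv p u 1) mod int p = 1"
    using fun_cong[OF inv(2), of 1] unfolding zp_mult_def zp_one_def by simp
  hence "zp_inv p u 1 \<noteq> 0" by auto
  thus "zp_unit p (zp_inv p u)" using inv(1) unfolding zp_unit_def by simp
qed

lemma unit_residue_nonzero:
  assumes "CHAR('k::field) = p" "zp_unit p u"
  shows "(of_int (u 1) :: 'k) \<noteq> 0"
  using unit_residue_not_dvd[OF assms(2)] of_int_eq_0_iff_char_dvd[where 'a='k] assms(1) by simp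

lemma unit_residue_mult:
  assumes "prime p" "CHAR('k::field) = p" "zp_unit p u" "zp_unit p t"
  shows "(of_int (zp_mult p u t 1) :: 'k) = of_int (u 1) * of_int (t 1)"
  using zp_unit_mult(2)[OF assms(1,3,4)] of_int_mod_char[OF assms(2)] by simp

lemma unit_residue_inv:
  assumes "prime p" "CHAR('k::field) = p" "zp_unit p u"
  shows "(of_int (zp_inv p u 1) :: 'k) = inverse (of_int (u 1))"
proof -
  have "(of_int (u 1) :: 'k) * of_int (zp_inv p u 1) = 1"
    using zp_inv_unit(2)[OF assms(1,3)] of_int_mod_char[OF assms(2), of "u 1 * zp_inv p u 1"] by simp
  thus ?thesis using unit_residue_nonzero[OF assms(2,3)] by (simp add: field_simps)
qed

lemma fps_binom_zp_const: "(fps_binom_zp c :: 'k::field fps) $ 0 = 1"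
  unfolding fps_binom_zp_def by (simp add: fps_power_zeroth)

lemma gX_const: "(gX a :: 'k::field fps) $ 0 = 0"
  unfolding gX_def by (simp add: fps_binom_zp_const)

lemma fps_pow_zp_const: "(fps_pow_zp F c :: 'k::field fps) $ 0 = 1"
  unfolding fps_pow_zp_def by (simp add: fps_binom_zp_const)

lemma gamma_fls_power_series:
  "\<exists>H. gamma_fls a (fps_to_fls F) = fps_to_fls H \<and> H $ 0 = (F $ 0 :: 'k::field)"
proof (cases "gX a = (0::'k fps)")
  case True
  show ?thesis unfolding gamma_fls_def True fls_compose_fps_0_right
    by (intro exI[of _ "fps_const (F $ 0)"]) (simp add: fls_subdegree_fls_to_fps_gt0)
next
  case False
  show ?thesis unfolding gamma_fls_def
    by (intro exI[of _ "fps_compose F (gX a)"]) (simp add: fls_compose_fps_to_fls[OF False gX_const])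
qed

lemma theta_act_B_unit_ratio:
  fixes lam :: "'k::field"
  assumes y: "y \<in> plim p r lam"
    and ratio: "qp_mult p d (qp_inv p a) = Some (0, u)"
    and integral: "qp_mult p b (qp_inv p d) = None
                    \<or> (\<exists>w t. qp_mult p b (qp_inv p d) = Some (w, t) \<and> w \<ge> 0)"
  shows "theta (act_B p r s lam (a, b, d) y)
     = inverse (omega p a ^ r * chi p s lam a ^ 2) * (of_int (zp_inv p u 1) powi s) * theta y"
proof -
  obtain al be where y0: "y 0 = (fps_to_fls al, fls_X_intpow (int r) * fps_to_fls be)"
    using y unfolding plim_def Dsharp_def by blast
  obtain H where H: "gamma_fls (zp_inv p u) (fps_to_fls al) = fps_to_fls H" "H $ 0 = al $ 0"
    using gamma_fls_power_series by blast
  define cu :: 'k where "cu = of_int (zp_inv p u 1) powi s"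
  define cz :: 'k where "cz = inverse (omega p a ^ r * chi p s lam a ^ 2)"
  define P :: "'k fps" where
    "P = fps_pow_zp (f_gamma (zp_inv p u)) (zp_frac p (int (r + 1)) (int p + 1))"
  define V where "V = act_scal p r s lam a (act_shift p r lam 0 (act_gam p r s u y))"
  have P_const: "P $ 0 = 1" unfolding P_def by (rule fps_pow_zp_const)
  have no_shift: "act_shift p r lam 0 v = v" for v :: "nat \<Rightarrow> 'k dmod"
    unfolding act_shift_def by auto
  have V0: "fst (V 0) = fps_to_fls (fps_const cz * (H * fps_const cu * P))"
    unfolding V_def no_shift act_scal_def act_gam_def gammaD_def smulD_def y0
    by (simp add: H cu_def cz_def P_def fls_times_fps_to_fls)
  have unipotent: "fls_nth (fst (act_unip p r lam (qp_mult p b (qp_inv p d)) V 0)) 0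
                     = fls_nth (fst (V 0)) 0"
    using integral
  proof
    assume "qp_mult p b (qp_inv p d) = None"
    thus ?thesis unfolding act_unip_def by simp
  next
    assume "\<exists>w t. qp_mult p b (qp_inv p d) = Some (w, t) \<and> w \<ge> 0"
    then obtain w t where wt: "qp_mult p b (qp_inv p d) = Some (w, t)" "w \<ge> 0" by blast
    show ?thesis unfolding act_unip_def wt using wt(2)
      by (simp add: smulD_def V0 fls_times_fps_to_fls[symmetric] del: fps_to_fls_nth)
         (simp add: fps_binom_zp_const)
  qed
  have "theta (act_B p r s lam (a, b, d) y) = fls_nth (fst (V 0)) 0"
    unfolding theta_def act_B_def using unipotent by (simp add: ratio V_def)
  also have "\<dots> = cz * cu * al $ 0"
    unfolding V0 using H P_const by simp
  finally show ?thesis unfolding theta_def y0 cu_def cz_def by simp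
qed

lemma qp_of_zp_unit:
  assumes "x 1 \<noteq> 0"
  shows "qp_of_zp p x = Some (0, x)"
proof -
  have "x \<noteq> zp_zero" using assms unfolding zp_zero_def by auto
  moreover have "(LEAST n. x (Suc n) \<noteq> 0) = 0" using assms by (intro Least_eq_0) simp
  ultimately show ?thesis unfolding qp_of_zp_def by simp
qed

lemma qp_of_zp_cases: "qp_of_zp p x = None \<or> (\<exists>m t. qp_of_zp p x = Some (int m, t))"
  unfolding qp_of_zp_def by (auto simp: Let_def)

lemma BKZ_shape:
  assumes "(a, b, d) \<in> BKZ p"
  obtains v au du where "a = Some (v, au)" "d = Some (v, du)" "zp_unit p au" "zp_unit p du"
    "b = None \<or> (\<exists>m t. b = Some (v + int m, t))"
proof -
  obtain z k11 k12 k21 k22 where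
    aU: "a \<in> qp_units p" and dU: "d \<in> qp_units p" and zU: "z \<in> qp_units p"
    and G: "(k11, k12, k21, k22) \<in> GL2Zp p"
    and ea: "a = qp_mult p z (qp_of_zp p k11)" and eb: "b = qp_mult p z (qp_of_zp p k12)"
    and e21: "None = qp_mult p z (qp_of_zp p k21)" and ed: "d = qp_mult p z (qp_of_zp p k22)"
    using assms unfolding BKZ_def Bor_def by blast
  obtain v uz where z: "z = Some (v, uz)" using zU unfolding qp_units_def by auto
  have "qp_of_zp p k21 = None" using e21 unfolding z qp_mult_def by (auto split: option.splits)
  hence k21: "k21 = zp_zero" unfolding qp_of_zp_def by (auto split: if_splits simp: Let_def)
  have "zp_unit p (zp_sub p (zp_mult p k11 k22) (zp_mult p k12 k21))"
    using G unfolding GL2Zp_def by blast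
  hence "((k11 1 * k22 1) mod int p) mod int p \<noteq> 0"
    unfolding zp_unit_def zp_sub_def zp_mult_def k21 zp_zero_def by simp
  hence "k11 1 \<noteq> 0" "k22 1 \<noteq> 0" by auto
  hence a: "a = Some (v, zp_mult p uz k11)" and d: "d = Some (v, zp_mult p uz k22)"
    unfolding ea ed z qp_mult_def by (simp_all add: qp_of_zp_unit)
  show ?thesis
  proof
    show "zp_unit p (zp_mult p uz k11)" "zp_unit p (zp_mult p uz k22)"
      using aU dU unfolding a d qp_units_def qp_wf_def by simp_all
    show "b = None \<or> (\<exists>m t. b = Some (v + int m, t))"
      using qp_of_zp_cases[of p k12] unfolding eb z qp_mult_def by auto
  qed (fact a d)+
qed

lemma theta_act_B_inv_BKZ:
  fixes lam :: "'k::field"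
  assumes "prime p" "CHAR('k) = p" and y: "y \<in> plim p r lam"
    and a: "a = Some (v, au)" and d: "d = Some (v, du)"
    and units: "zp_unit p au" "zp_unit p du"
    and b: "b = None \<or> (\<exists>m t. b = Some (v + int m, t))"
  shows "theta (act_B p r s lam (B_inv p (a, b, d)) y)
     = inverse (inverse (of_int (au 1)) ^ r
                 * (inverse (of_int (au 1)) powi s * lam powi (- v)) ^ 2)
       * inverse (inverse (of_int (du 1)) * of_int (au 1)) powi s * theta y"
proof -
  let ?A = "of_int (au 1) :: 'k" and ?D = "of_int (du 1) :: 'k"
  define u where "u = zp_mult p (zp_inv p du) (zp_inv p (zp_inv p au))"
  define b' where "b' = qp_neg p (qp_mult p b (qp_mult p (qp_inv p a) (qp_inv p d)))"
  have Binv: "B_inv p (a, b, d) = (qp_inv p a, b', qp_inv p d)"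
    unfolding B_inv_def b'_def by simp
  have ratio: "qp_mult p (qp_inv p d) (qp_inv p (qp_inv p a)) = Some (0, u)"
    unfolding a d u_def qp_inv_def qp_mult_def by simp
  have integral: "qp_mult p b' (qp_inv p (qp_inv p d)) = None \<or>
     (\<exists>w t. qp_mult p b' (qp_inv p (qp_inv p d)) = Some (w, t) \<and> w \<ge> 0)"
    using b unfolding b'_def a d qp_mult_def qp_neg_def qp_inv_def by auto
  have inv_units: "zp_unit p (zp_inv p au)" "zp_unit p (zp_inv p du)"
    "zp_unit p (zp_inv p (zp_inv p au))"
    using zp_inv_unit(1)[OF assms(1)] units by blast+
  have "zp_unit p u" unfolding u_def using zp_unit_mult(1)[OF assms(1)] inv_units by blast
  hence "(of_int (zp_inv p u 1) :: 'k) = inverse (of_int (u 1))"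
    by (rule unit_residue_inv[OF assms(1,2)])
  also have "(of_int (u 1) :: 'k) = inverse ?D * ?A"
    unfolding u_def unit_residue_mult[OF assms(1,2) inv_units(2,3)]
    using unit_residue_inv[OF assms(1,2)] inv_units units by simp
  finally have u_res: "(of_int (zp_inv p u 1) :: 'k) = inverse (inverse ?D * ?A)" .
  have omega_inv: "omega p (qp_inv p a) = inverse ?A"
    unfolding omega_def a qp_inv_def using unit_residue_inv[OF assms(1,2) units(1)] by simp
  have chi_inv: "chi p s lam (qp_inv p a) = inverse ?A powi s * lam powi (- v)"
    unfolding chi_def using omega_inv unfolding a qp_inv_def by simp
  show ?thesis
    unfolding Binv theta_act_B_unit_ratio[OF y ratio integral] omega_inv chi_inv u_res ..
qed

lemma character_factor_identity:
  fixes A D lam :: "'k::field"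
  assumes "A \<noteq> 0" "D \<noteq> 0" "lam \<noteq> 0"
  shows "inverse (inverse A ^ r * (inverse A powi s * lam powi (- v)) ^ 2)
           * inverse (inverse D * A) powi s
         = (A * D) powi s * lam powi (v + v) * A ^ r"
proof -
  define X where "X = A powi s"
  define Y where "Y = D powi s"
  define L where "L = lam powi v"
  have nonzero: "X \<noteq> 0" "Y \<noteq> 0" "L \<noteq> 0" using assms unfolding X_def Y_def L_def by auto
  have "inverse (inverse D * A) = D * inverse A" using assms by (simp add: field_simps)
  hence ratio: "inverse (inverse D * A) powi s = Y * inverse X"
    unfolding X_def Y_def by (simp add: power_int_mult_distrib power_int_inverse)
  have inv_A: "inverse A powi s = inverse X" unfolding X_def by (simp add: power_int_inverse)
  have inv_lam: "lam powi (- v) = inverse L" unfolding L_def by (simp add: power_int_minus)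
  have prod: "(A * D) powi s = X * Y" unfolding X_def Y_def by (simp add: power_int_mult_distrib)
  have square: "lam powi (v + v) = L * L" unfolding L_def using power_int_add[of lam v v] assms by simp
  show ?thesis unfolding ratio inv_A inv_lam prod square
    using nonzero assms by (simp add: field_simps power2_eq_square)
qed

theorem mainTheorem7:
  fixes p r :: nat and s :: int and lam :: "'k::field" and a b d :: qp
  assumes "prime p" and "CHAR('k) = p" and "finite (UNIV :: 'k set)"
    and "r < p" and "lam \<noteq> 0"
    and "(a, b, d) \<in> BKZ p"
  shows "\<forall>y \<in> plim p r lam.
           theta (act_B p r s lam (B_inv p (a, b, d)) y)
             = chi p s lam (qp_mult p a d) * omega p a ^ r * theta y"
proof
  fix y assume y: "y \<in> plim p r lam"
  obtain v au du where a: "a = Some (v, au)" and d: "d = Some (v, du)"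
    and units: "zp_unit p au" "zp_unit p du" and b: "b = None \<or> (\<exists>m t. b = Some (v + int m, t))"
    using BKZ_shape[OF assms(6)] by blast
  let ?A = "of_int (au 1) :: 'k" and ?D = "of_int (du 1) :: 'k"
  have "chi p s lam (qp_mult p a d) = (?A * ?D) powi s * lam powi (v + v)"
    unfolding chi_def omega_def a d qp_mult_def
    using unit_residue_mult[OF assms(1,2) units] by simp
  moreover have "omega p a = ?A" unfolding omega_def a by simp
  ultimately show "theta (act_B p r s lam (B_inv p (a, b, d)) y)
                     = chi p s lam (qp_mult p a d) * omega p a ^ r * theta y"
    unfolding theta_act_B_inv_BKZ[OF assms(1,2) y a d units b]
    using character_factor_identity[OF unit_residue_nonzero[OF assms(2) units(1)]
                                       unit_residue_nonzero[OF assms(2) units(2)] assms(5)]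
    by simp
qed

end
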